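(* Let $G=(V,v,E)$ be a directed graph with $V=\{1,\dots,n\}$, target node $v$, edge set $E$, and let $Z$ be a set of ordered node pairs with $Z\cap E=\emptyset$. For $\mathbf{y}\in\{0,1\}^{Z}$ with support $Y$, let $\mathcal{FR}(\mathbf{y})\ge0$ be the expected first return time to $v$ of the PageRank random walk on $(V,E\cup Y)$. Let $\mathcal{Y}$ be a constraint set with $\mathcal{Y}\cap\{0,1\}^{Z}\ne\emptyset$, for disjoint $S,N\subseteq Z$ let $\gamma(S,N)=\min\{\mathcal{FR}(\mathbf{y}): y_e=1\ \forall e\in S,\ y_e=0\ \forall e\in N,\ \mathbf{y}\in\{0,1\}^{Z}\}$, and let $m=\min_{\mathbf{y}\in\{0,1\}^{Z}}\mathcal{FR}(\mathbf{y})$. Let $\bar{\mathbf{y}}\in\mathcal{Y}\cap\{0,1\}^{Z}$ with support $\bar Y$, let $e^1,\dots,e^{K}$ be an arbitrary ordering of $Z\setminus\bar Y$, and let $\hat\pi_{e^r}(\bar{\mathbf{y}})=\min\{0,-\mathcal{FR}(\bar{\mathbf{y}})+\gamma(\{e^r\},\{e^{r+1},\dots,e^{K}\})\}$. Define for $\mathbf{y}\in[0,1]^{Z}$ $$B(\mathbf{y})=\mathcal{FR}(\bar{\mathbf{y}})+\sum_{e\in\bar Y}\min\{0,\gamma(\emptyset,\{e\})-\mathcal{FR}(\bar{\mathbf{y}})\}(1-y_e)+\sum_{k=1}^{K}\hat\pi_{e^k}(\bar{\mathbf{y}})y_{e^k},$$ $$L(\mathbf{y})=\mathcal{FR}(\bar{\mathbf{y}})+\sum_{e\in\bar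 Y}(m-\mathcal{FR}(\bar{\mathbf{y}}))(1-y_e)+\sum_{e\in Z\setminus\bar Y}(m-\mathcal{FR}(\bar{\mathbf{y}}))y_e.$$ Then the inequality $\theta\ge B(\mathbf{y})$ is stronger than the $L$-shaped inequality $\theta\ge L(\mathbf{y})$, i.e. $B(\mathbf{y})\ge L(\mathbf{y})$ for all $\mathbf{y}\in[0,1]^{Z}$ (coefficientwise comparison).
   Context: The PageRank random walk is the random walk defined by the PageRank (Google) matrix with fixed damping and teleportation, as in Csáji–Jungers–Blondel; the expected first return time to $v$ is the expected number of steps for the walk started at $v$ to return to $v$. *)

theory Defs
  imports Complex_Main
begin

type_synonym node = nat
type_synonym edge = "nat \<times> nat"

definition outdeg :: "nat \<Rightarrow> edge set \<Rightarrow> nat \<Rightarrow> nat" where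
  "outdeg n Ed i = card {j \<in> {1..n}. (i, j) \<in> Ed}"

definition link_prob :: "nat \<Rightarrow> edge set \<Rightarrow> nat \<Rightarrow> nat \<Rightarrow> real" where
  "link_prob n Ed i j =
     (if outdeg n Ed i = 0 then 1 / real n
      else if (i, j) \<in> Ed then 1 / real (outdeg n Ed i) else 0)"

definition pagerank_prob :: "real \<Rightarrow> (nat \<Rightarrow> real) \<Rightarrow> nat \<Rightarrow> edge set \<Rightarrow> nat \<Rightarrow> nat \<Rightarrow> real" where
  "pagerank_prob alpha z n Ed i j = alpha * link_prob n Ed i j + (1 - alpha) * z j"

text \<open>taboo_prob ... k j: probability that the walk started at v is at j at step k
  without having visited v at any of the steps 1..k-1 (k >= 1).\<close>
fun taboo_prob :: "real \<Rightarrow> (nat \<Rightarrow> real) \<Rightarrow> nat \<Rightarrow> edge set \<Rightarrow> nat \<Rightarrow> nat \<Rightarrow> nat \<Rightarrow> real" where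
  "taboo_prob alpha z n Ed v 0 j = (if j = v then 1 else 0)"
| "taboo_prob alpha z n Ed v (Suc k) j =
     (\<Sum>i\<in>{1..n}. (if k = 0 \<or> i \<noteq> v then taboo_prob alpha z n Ed v k i else 0)
                   * pagerank_prob alpha z n Ed i j)"

definition first_return_time :: "real \<Rightarrow> (nat \<Rightarrow> real) \<Rightarrow> nat \<Rightarrow> edge set \<Rightarrow> nat \<Rightarrow> real" where
  "first_return_time alpha z n Ed v =
     (\<Sum>k. real (Suc k) * taboo_prob alpha z n Ed v (Suc k) v)"

text \<open>FR(y) for the binary vector y with support Y: graph (V, E \<union> Y).\<close>
definition FR :: "real \<Rightarrow> (nat \<Rightarrow> real) \<Rightarrow> nat \<Rightarrow> edge set \<Rightarrow> nat \<Rightarrow> edge set \<Rightarrow> real" where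
  "FR alpha z n E v Y = first_return_time alpha z n (E \<union> Y) v"

text \<open>gamma(S,N) = min of FR over binary y with y_e = 1 on S and y_e = 0 on N
  (binary vectors represented by their supports Y \<subseteq> Z).\<close>
definition gamma :: "real \<Rightarrow> (nat \<Rightarrow> real) \<Rightarrow> nat \<Rightarrow> edge set \<Rightarrow> nat \<Rightarrow> edge set
    \<Rightarrow> edge set \<Rightarrow> edge set \<Rightarrow> real" where
  "gamma alpha z n E v Z S N =
     Min (FR alpha z n E v ` {Y. Y \<subseteq> Z \<and> S \<subseteq> Y \<and> Y \<inter> N = {}})"

end

theory Submission
  imports Defs
begin

text \<open>Each \<gamma>(S, N) that occurs is a minimum of FR over a nonempty subfamily of the supports
  Y \<subseteq> Z (Y = {} resp. Y = {e^k} is feasible), hence is at least the global minimum m;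
  as also FR(ybar) \<ge> m, every coefficient of B dominates the corresponding coefficient
  m - FR(ybar) of L, and the multipliers 1 - y_e and y_e are nonnegative on [0,1]^Z.
  Nothing about the PageRank walk beyond FR being a real-valued function of the support is
  used.\<close>

lemma Min_FR_le_gamma:
  assumes "finite Z" and "Y \<subseteq> Z" and "S \<subseteq> Y" and "Y \<inter> N = {}"
  shows "Min (FR alpha z n E v ` Pow Z) \<le> gamma alpha z n E v Z S N"
proof -
  let ?feasible = "{Y. Y \<subseteq> Z \<and> S \<subseteq> Y \<and> Y \<inter> N = {}}"
  have "?feasible \<noteq> {}" and "?feasible \<subseteq> Pow Z"
    using assms(2-4) by blast+
  with \<open>finite Z\<close> show ?thesis
    unfolding gamma_def by (intro Min_antimono image_mono) (auto intro: finite_subset)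
qed

lemma sum_coefficientwise_le:
  fixes a c w :: "'a \<Rightarrow> 'b::ordered_comm_semiring"
  assumes "\<And>x. x \<in> A \<Longrightarrow> c x \<le> a x" and "\<And>x. x \<in> A \<Longrightarrow> 0 \<le> w x"
  shows "(\<Sum>x\<in>A. c x * w x) \<le> (\<Sum>x\<in>A. a x * w x)"
  using assms by (intro sum_mono mult_right_mono)

lemma sum_reindexed_coefficientwise_le:
  fixes y :: "'a \<Rightarrow> 'b::linordered_idom"
  assumes bij: "bij_betw ord {1..K} R"
    and "\<And>e. e \<in> A \<Longrightarrow> c \<le> a e" and "\<And>k. k \<in> {1..K} \<Longrightarrow> c \<le> b k"
    and "\<And>e. e \<in> A \<Longrightarrow> y e \<le> 1" and "\<And>e. e \<in> R \<Longrightarrow> 0 \<le> y e"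
  shows "(\<Sum>e\<in>A. c * (1 - y e)) + (\<Sum>e\<in>R. c * y e)
         \<le> (\<Sum>e\<in>A. a e * (1 - y e)) + (\<Sum>k=1..K. b k * y (ord k))"
proof -
  have "(\<Sum>e\<in>R. c * y e) = (\<Sum>k=1..K. c * y (ord k))"
    by (rule sum.reindex_bij_betw[OF bij, symmetric])
  moreover have "(\<Sum>e\<in>A. c * (1 - y e)) \<le> (\<Sum>e\<in>A. a e * (1 - y e))"
    using assms(2,4) by (intro sum_coefficientwise_le) auto
  moreover have "(\<Sum>k=1..K. c * y (ord k)) \<le> (\<Sum>k=1..K. b k * y (ord k))"
    using assms(3,5) bij_betwE[OF bij] by (intro sum_coefficientwise_le) auto
  ultimately show ?thesis
    by (metis add_mono)
qed

theorem corollary2: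
  fixes alpha :: real and z :: "nat \<Rightarrow> real" and n :: nat and v :: nat
    and E Z :: "(nat \<times> nat) set"
    and Ycal :: "((nat \<times> nat) \<Rightarrow> real) set"
    and ybar :: "(nat \<times> nat) \<Rightarrow> real"
    and ord :: "nat \<Rightarrow> nat \<times> nat"
  assumes n_pos: "n \<ge> 1"
    and v_in: "v \<in> {1..n}"
    and alpha: "0 < alpha" "alpha < 1"
    and z_pos: "\<forall>j\<in>{1..n}. z j > 0"
    and z_sum: "(\<Sum>j\<in>{1..n}. z j) = 1"
    and E_sub: "E \<subseteq> {1..n} \<times> {1..n}"
    and Z_sub: "Z \<subseteq> {1..n} \<times> {1..n}"
    and ZE: "Z \<inter> E = {}"
    and ybar_in: "ybar \<in> Ycal"
    and ybar_bin: "\<forall>e\<in>Z. ybar e \<in> {0, 1}"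
    and ybar_ext: "\<forall>e. e \<notin> Z \<longrightarrow> ybar e = 0"
    and ord_bij: "bij_betw ord {1..card (Z - {e\<in>Z. ybar e = 1})} (Z - {e\<in>Z. ybar e = 1})"
  shows
    "let Ybar = {e\<in>Z. ybar e = 1};
         K = card (Z - Ybar);
         FRb = FR alpha z n E v Ybar;
         \<gamma> = gamma alpha z n E v Z;
         m = Min (FR alpha z n E v ` Pow Z);
         \<pi> = (\<lambda>r. min 0 (- FRb + \<gamma> {ord r} (ord ` {r+1..K})));
         B = (\<lambda>y. FRb + (\<Sum>e\<in>Ybar. min 0 (\<gamma> {} {e} - FRb) * (1 - y e))
                       + (\<Sum>k=1..K. \<pi> k * y (ord k)));
         L = (\<lambda>y. FRb + (\<Sum>e\<in>Ybar. (m - FRb) * (1 - y e))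
                       + (\<Sum>e\<in>Z - Ybar. (m - FRb) * y e))
     in (\<forall>e\<in>Ybar. min 0 (\<gamma> {} {e} - FRb) \<ge> m - FRb)
      \<and> (\<forall>k\<in>{1..K}. \<pi> k \<ge> m - FRb)
      \<and> (\<forall>y. (\<forall>e\<in>Z. 0 \<le> y e \<and> y e \<le> 1) \<longrightarrow> B y \<ge> L y)"
proof -
  define Ybar where "Ybar = {e\<in>Z. ybar e = 1}"
  define K where "K = card (Z - Ybar)"
  define FRb where "FRb = FR alpha z n E v Ybar"
  define m where "m = Min (FR alpha z n E v ` Pow Z)"
  define \<pi> where "\<pi> r = min 0 (- FRb + gamma alpha z n E v Z {ord r} (ord ` {r+1..K}))" for r
  have "finite Z" using Z_sub finite_subset by blast
  have bij: "bij_betw ord {1..K} (Z - Ybar)" using ord_bij unfolding K_def Ybar_def .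
  have m_le_FRb: "m \<le> FRb"
    unfolding m_def FRb_def Ybar_def using \<open>finite Z\<close> by (intro Min_le) auto
  have coeff_Ybar: "\<forall>e\<in>Ybar. m - FRb \<le> min 0 (gamma alpha z n E v Z {} {e} - FRb)"
    using Min_FR_le_gamma[OF \<open>finite Z\<close>, of "{}"] m_le_FRb unfolding m_def by auto
  have coeff_rest: "\<forall>k\<in>{1..K}. m - FRb \<le> \<pi> k"
  proof
    fix k assume k: "k \<in> {1..K}"
    have "ord k \<in> Z"
      using bij_betwE[OF bij] k by blast
    moreover have "ord k \<notin> ord ` {k+1..K}"
      using bij_betw_imp_inj_on[OF bij] k by (auto simp: inj_on_image_mem_iff)
    ultimately show "m - FRb \<le> \<pi> k"
      using Min_FR_le_gamma[OF \<open>finite Z\<close>, of "{ord k}"] m_le_FRb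
      unfolding m_def \<pi>_def by auto
  qed
  have B_ge_L:
    "FRb + (\<Sum>e\<in>Ybar. (m - FRb) * (1 - y e)) + (\<Sum>e\<in>Z - Ybar. (m - FRb) * y e)
     \<le> FRb + (\<Sum>e\<in>Ybar. min 0 (gamma alpha z n E v Z {} {e} - FRb) * (1 - y e))
          + (\<Sum>k=1..K. \<pi> k * y (ord k))"
    if y: "\<forall>e\<in>Z. 0 \<le> y e \<and> y e \<le> 1" for y
  proof -
    have "Ybar \<subseteq> Z" unfolding Ybar_def by blast
    then have "(\<Sum>e\<in>Ybar. (m - FRb) * (1 - y e)) + (\<Sum>e\<in>Z - Ybar. (m - FRb) * y e)
        \<le> (\<Sum>e\<in>Ybar. min 0 (gamma alpha z n E v Z {} {e} - FRb) * (1 - y e))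
          + (\<Sum>k=1..K. \<pi> k * y (ord k))"
      using coeff_Ybar coeff_rest y by (intro sum_reindexed_coefficientwise_le[OF bij]) auto
    then show ?thesis by linarith
  qed
  show ?thesis
    unfolding Let_def Ybar_def[symmetric] K_def[symmetric] FRb_def[symmetric]
      m_def[symmetric] \<pi>_def[symmetric]
    using coeff_Ybar coeff_rest B_ge_L by blast
qed

end
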